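(* Let $T>0$, let $h:(0,\infty)\to(0,\infty)$ be bounded with $\lim_{u\to0^+}h(u)=\lim_{u\to+\infty}h(u)=0$, and let $A\in C^1([0,T]\times(0,1)^n;\mathbb S(n))$ satisfy $|A_{ij}(s,\mu)|\le(\mu^i+\mu^j)h(\mu^j/\mu^i)$ for all $(i,j)\in\mathbb E$ and $(s,\mu)\in[0,T]\times(0,1)^n$. There exists a constant $K>1$, depending only on $n$, $\omega_{\min}$, $\omega_{\max}$ and $h$, such that the following holds. Let $\epsilon>0$, $\mu\in\mathcal P_\epsilon(\mathbb G)$, $t_0\in(0,T]$, and let $\rho\in C^1([0,t_0];(0,1)^n)$ be a classical solution of $\dot\rho(s)=\nabla_{\mathbb G}\cdot A(s,\rho(s))+\Delta_{\mathbb G}\rho(s)$, $\rho(0)=\mu$. If $\delta\in(0,\epsilon/K)$, $i_0\in\{1,\dots,n\}$, and $t_0$ is the first time such that $\rho_{i_0}(t_0)=\delta$, then $$\min_{s\in[0,t_0]}\rho_i(s)\le K\delta\qquad\text{for all }i\in\{1,\dots,n\}.$$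
   Context: $\mathbb G=(\mathbb V,\mathbb E,\omega)$: finite, connected, simple undirected graph, $\mathbb V=\{1,\dots,n\}$, edges ordered pairs with $(i,j)\in\mathbb E\iff(j,i)\in\mathbb E$, symmetric weights $\omega_{ij}>0$ iff $(i,j)\in\mathbb E$; $\omega_{\min},\omega_{\max}$ the min/max edge weights. $\mathbb S(n)$: skew-symmetric $n\times n$ matrices. $(\nabla_{\mathbb G}\cdot m)^i=\sum_{j\ne i}\sqrt{\omega_{ij}}m^{ji}$; $(\Delta_{\mathbb G}u)^i=\sum_j\omega_{ij}(u^j-u^i)$. $\mathcal P_\epsilon(\mathbb G)$: probability vectors in $\mathbb R^n$ with all entries $>\epsilon$. $\rho_i$ denotes the $i$-th component. *)

theory Defs
  imports "HOL-Analysis.Analysis"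
begin

text \<open>Vertices of the graph are the elements of a finite type 'n (so n = CARD('n)).
  Edge weights are w :: 'n => 'n => real, with w i j > 0 iff (i,j) is an edge.\<close>

definition weighted_graph :: "('n::finite \<Rightarrow> 'n \<Rightarrow> real) \<Rightarrow> bool" where
  "weighted_graph w \<longleftrightarrow>
     (\<forall>i j. w i j \<ge> 0) \<and> (\<forall>i j. w i j = w j i) \<and> (\<forall>i. w i i = 0) \<and>
     (\<forall>i j. (\<lambda>a b. w a b > 0)\<^sup>*\<^sup>* i j)"

definition edge_weights :: "('n::finite \<Rightarrow> 'n \<Rightarrow> real) \<Rightarrow> real set" where
  "edge_weights w = {w i j | i j. w i j > 0}"

definition omega_min :: "('n::finite \<Rightarrow> 'n \<Rightarrow> real) \<Rightarrow> real" where
  "omega_min w = Min (edge_weights w)"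

definition omega_max :: "('n::finite \<Rightarrow> 'n \<Rightarrow> real) \<Rightarrow> real" where
  "omega_max w = Max (edge_weights w)"

definition graph_div :: "('n::finite \<Rightarrow> 'n \<Rightarrow> real) \<Rightarrow> real^'n^'n \<Rightarrow> real^'n" where
  "graph_div w m = (\<chi> i. \<Sum>j\<in>UNIV - {i}. sqrt (w i j) * m $ j $ i)"

definition graph_lap :: "('n::finite \<Rightarrow> 'n \<Rightarrow> real) \<Rightarrow> real^'n \<Rightarrow> real^'n" where
  "graph_lap w u = (\<chi> i. \<Sum>j\<in>UNIV. w i j * (u $ j - u $ i))"

definition P_eps :: "real \<Rightarrow> (real^'n::finite) set" where
  "P_eps eps = {x. (\<Sum>i\<in>UNIV. x $ i) = 1 \<and> (\<forall>i. x $ i > eps)}"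

definition open_cube :: "(real^'n::finite) set" where
  "open_cube = {x. \<forall>i. 0 < x $ i \<and> x $ i < 1}"

definition C1_on :: "'a::real_normed_vector set \<Rightarrow> ('a \<Rightarrow> 'b::real_normed_vector) \<Rightarrow> bool" where
  "C1_on S f \<longleftrightarrow> (\<exists>f'. (\<forall>x\<in>S. (f has_derivative blinfun_apply (f' x)) (at x within S))
                        \<and> continuous_on S f')"

end

theory Submission
  imports Defs
begin

(* If rho_k first reaches a level c below its initial value at time s, then rho_k'(s) <= 0.
   Divided by c, the equation at s reads  sum_j sqrt(w_kj) a_j + w_kj (x_j - 1) <= 0  with
   x_j = rho_j(s)/c and |a_j| <= (x_j + 1) h(1/x_j).  Every term is bounded below by a constant,
   and for large x_j the Laplacian term w_kj (x_j - 1) dominates the flux term because h vanishes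
   at 0.  Hence every neighbour j of k satisfies rho_j(s) <= L c, with L depending only on n,
   omega_min, omega_max and h.  Starting from rho_i0(t0) = delta and following a path from i0 to i
   of length m <= n^2 gives  min rho_i <= L^m delta <= L^(n^2) delta. *)

lemma has_real_derivative_nonpos_at_first_hit:
  fixes f :: "real \<Rightarrow> real"
  assumes deriv: "(f has_real_derivative D) (at s within {a..b})"
    and s: "a < s" "s \<le> b"
    and above: "\<And>u. u \<in> {a..<s} \<Longrightarrow> f s \<le> f u"
  shows "D \<le> 0"
proof -
  have "(f has_real_derivative D) (at_left s)"
    using has_field_derivative_subset[OF deriv, of "{a..s}"] s
    by (simp add: at_within_Icc_at_left)
  then have "((\<lambda>u. (f u - f s) / (u - s)) \<longlongrightarrow> D) (at_left s)"
    by (simp add: has_field_derivative_iff)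
  moreover have "\<forall>\<^sub>F u in at_left s. (f u - f s) / (u - s) \<le> 0"
    using eventually_at_left_real[OF \<open>a < s\<close>]
    by eventually_elim (auto simp: above divide_nonneg_neg)
  ultimately show ?thesis
    by (rule tendsto_upperbound) simp
qed

lemma first_hitting_time:
  fixes f :: "real \<Rightarrow> real"
  assumes cont: "continuous_on {a..b} f" and start: "c < f a"
    and hit: "s1 \<in> {a..b}" "f s1 \<le> c"
  shows "\<exists>s\<in>{a<..b}. f s = c \<and> (\<forall>u\<in>{a..<s}. c < f u)"
proof -
  define Z where "Z = {a..b} \<inter> f -` {..c}"
  have "closed Z"
    unfolding Z_def using cont by (intro continuous_closed_preimage) auto
  moreover have "Z \<noteq> {}" "bdd_below Z"
    using hit by (auto simp: Z_def)
  ultimately have "Inf Z \<in> Z"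
    by (rule_tac closed_contains_Inf) auto
  define s where "s = Inf Z"
  have s: "a \<le> s" "s \<le> b" "f s \<le> c"
    using \<open>Inf Z \<in> Z\<close> by (auto simp: Z_def s_def)
  have before: "c < f u" if "u \<in> {a..<s}" for u
  proof -
    have "u \<notin> Z"
      using that cInf_lower[OF _ \<open>bdd_below Z\<close>, of u] by (force simp: s_def)
    then show ?thesis
      using that s by (auto simp: Z_def)
  qed
  obtain x where x: "a \<le> x" "x \<le> s" "f x = c"
    using IVT2'[of f s c a] s start continuous_on_subset[OF cont] by force
  then have "x = s"
    using before by force
  with x start have "f s = c" "a < s"
    by (auto simp: less_le)
  then show ?thesis
    using before s by auto
qed

lemma flux_term_lower_bound:
  fixes w wmax x a X M :: real
  assumes "0 \<le> w" "w \<le> wmax" "0 < x" "x \<le> X" "0 \<le> M"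
    and a: "\<bar>a\<bar> \<le> (x + 1) * M"
  shows "- (wmax + sqrt wmax * (X + 1) * M) \<le> sqrt w * a + w * (x - 1)"
proof -
  have "(x + 1) * M \<le> (X + 1) * M"
    using assms by (intro mult_right_mono) auto
  with a have "\<bar>a\<bar> \<le> (X + 1) * M"
    by linarith
  then have "sqrt w * \<bar>a\<bar> \<le> sqrt wmax * ((X + 1) * M)"
    using assms by (intro mult_mono) auto
  moreover have "- (sqrt w * \<bar>a\<bar>) \<le> sqrt w * a"
    using abs_ge_minus_self[of "sqrt w * a"] assms by (simp add: abs_mult)
  moreover have "- wmax \<le> w * (x - 1)"
    using assms mult_nonneg_nonneg[of w x] unfolding right_diff_distrib by linarith
  ultimately show ?thesis
    by (simp add: algebra_simps)
qed

lemma flux_term_dominated_by_laplacian: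
  fixes w wmin x a :: real
  assumes "0 < wmin" "wmin \<le> w" "5/3 \<le> x"
    and a: "\<bar>a\<bar> \<le> (x + 1) * (sqrt wmin / 4)"
  shows "wmin * (3 * x - 5) / 4 \<le> sqrt w * a + w * (x - 1)"
proof -
  have "sqrt w * \<bar>a\<bar> \<le> sqrt w * sqrt wmin * (x + 1) / 4"
    using mult_left_mono[OF a, of "sqrt w"] assms by (simp add: algebra_simps)
  also have "\<dots> \<le> sqrt w * sqrt w * (x + 1) / 4"
    using assms by (intro divide_right_mono mult_right_mono mult_left_mono) auto
  also have "\<dots> = w * (x + 1) / 4"
    using assms by simp
  finally have "- (w * (x + 1) / 4) \<le> sqrt w * a"
    using abs_ge_minus_self[of "sqrt w * a"] assms by (simp add: abs_mult)
  moreover have "wmin * (3 * x - 5) \<le> w * (3 * x - 5)"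
    using assms by (intro mult_right_mono) auto
  ultimately show ?thesis
    by (simp add: field_simps)
qed

lemma flux_term_bounds:
  fixes h :: "real \<Rightarrow> real"
  assumes "0 < wmin" "0 \<le> M" "2 \<le> X"
    and h_bdd: "\<forall>u>0. h u \<le> M" and h_small: "\<forall>u\<in>{0<..1/X}. h u \<le> sqrt wmin / 4"
    and "wmin \<le> w" "w \<le> wmax" and x: "0 < x" and a: "\<bar>a\<bar> \<le> (x + 1) * h (1 / x)"
  shows "- (wmax + sqrt wmax * (X + 1) * M) \<le> sqrt w * a + w * (x - 1)"
    and "X \<le> x \<Longrightarrow> wmin * (3 * x - 5) / 4 \<le> sqrt w * a + w * (x - 1)"
proof -
  show large: "wmin * (3 * x - 5) / 4 \<le> sqrt w * a + w * (x - 1)" if "X \<le> x"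
  proof -
    have "1 / x \<le> 1 / X"
      using that assms(3) by (intro divide_left_mono) auto
    then have "h (1 / x) \<le> sqrt wmin / 4"
      using h_small x by auto
    then have "\<bar>a\<bar> \<le> (x + 1) * (sqrt wmin / 4)"
      using x by (intro order_trans[OF a] mult_left_mono) auto
    then show ?thesis
      using assms that by (intro flux_term_dominated_by_laplacian) auto
  qed
  show "- (wmax + sqrt wmax * (X + 1) * M) \<le> sqrt w * a + w * (x - 1)"
  proof (cases "X \<le> x")
    case True
    then have "0 \<le> wmin * (3 * x - 5) / 4"
      using assms(1,3) by simp
    moreover have "0 \<le> wmax + sqrt wmax * (X + 1) * M"
      using assms by simp
    ultimately show ?thesis
      using large[OF True] by linarith
  next
    case False
    have "\<bar>a\<bar> \<le> (x + 1) * M"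
      using h_bdd x by (intro order_trans[OF a] mult_left_mono) auto
    then show ?thesis
      using assms False by (intro flux_term_lower_bound) auto
  qed
qed

definition level_ratio :: "nat \<Rightarrow> real \<Rightarrow> real \<Rightarrow> real \<Rightarrow> real \<Rightarrow> real" where
  "level_ratio N wmin wmax M X =
     max X ((4 * real N * (wmax + sqrt wmax * (X + 1) * M) / wmin + 5) / 3)"

lemma neighbour_ratio_le_level_ratio:
  fixes S :: "'i set" and wv x a :: "'i \<Rightarrow> real" and h :: "real \<Rightarrow> real"
  assumes "finite S" "0 < wmin" "0 \<le> M" "2 \<le> X"
    and h_bdd: "\<forall>u>0. h u \<le> M" and h_small: "\<forall>u\<in>{0<..1/X}. h u \<le> sqrt wmin / 4"
    and weights: "\<forall>i\<in>S. wv i = 0 \<or> wmin \<le> wv i \<and> wv i \<le> wmax"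
    and flux: "\<forall>i\<in>S. 0 < wv i \<longrightarrow> 0 < x i \<and> \<bar>a i\<bar> \<le> (x i + 1) * h (1 / x i)"
    and balance: "(\<Sum>i\<in>S. sqrt (wv i) * a i + wv i * (x i - 1)) \<le> 0"
    and j: "j \<in> S" "0 < wv j"
  shows "x j \<le> level_ratio (card S) wmin wmax M X"
proof -
  define C where "C = wmax + sqrt wmax * (X + 1) * M"
  define t where "t i = sqrt (wv i) * a i + wv i * (x i - 1)" for i
  note bounds = flux_term_bounds[where wmax = wmax, OF assms(2-4) h_bdd h_small, folded C_def]
  have "0 \<le> C"
    using weights j assms(2,3,4) by (fastforce simp: C_def)
  have edge_term: "wmin \<le> wv i" "wv i \<le> wmax" "0 < x i" "\<bar>a i\<bar> \<le> (x i + 1) * h (1 / x i)"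
    if "i \<in> S" "0 < wv i" for i
    using weights flux that by auto
  have lower: "- C \<le> t i" if "i \<in> S" for i
  proof (cases "0 < wv i")
    case True
    show ?thesis
      unfolding t_def using edge_term[OF that True] by (rule bounds(1))
  next
    case False
    then show ?thesis
      using weights that \<open>0 \<le> C\<close> assms(2) by (auto simp: t_def)
  qed
  have "- (real (card S) * C) \<le> - (real (card (S - {j})) * C)"
    using \<open>0 \<le> C\<close> by (simp add: card_Diff1_le mult_right_mono)
  also have "\<dots> \<le> (\<Sum>i\<in>S - {j}. t i)"
    using sum_mono[of "S - {j}" "\<lambda>_. - C" t] lower by simp
  finally have "t j \<le> real (card S) * C"
    using balance sum.remove[OF \<open>finite S\<close> j(1), of t] by (simp add: t_def)
  show ?thesis
  proof (cases "X \<le> x j")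
    case True
    have "wmin * (3 * x j - 5) / 4 \<le> t j"
      unfolding t_def using edge_term[OF j] True by (rule bounds(2))
    with \<open>t j \<le> real (card S) * C\<close> have "x j \<le> (4 * real (card S) * C / wmin + 5) / 3"
      using assms(2) by (simp add: field_simps)
    then show ?thesis
      unfolding level_ratio_def C_def[symmetric] by (rule max.coboundedI2)
  qed (simp add: level_ratio_def)
qed

lemma edge_weight_bounds:
  fixes w :: "'n::finite \<Rightarrow> 'n \<Rightarrow> real"
  assumes "0 < w i j"
  shows "0 < omega_min w" "omega_min w \<le> w i j" "w i j \<le> omega_max w"
proof -
  have "edge_weights w \<subseteq> (\<lambda>(a, b). w a b) ` UNIV"
    by (auto simp: edge_weights_def)
  then have fin: "finite (edge_weights w)"
    by (rule finite_subset) simp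
  have w_in: "w i j \<in> edge_weights w"
    using assms by (auto simp: edge_weights_def)
  then have "omega_min w \<in> edge_weights w"
    unfolding omega_min_def using fin by (intro Min_in) auto
  then show "0 < omega_min w"
    by (auto simp: edge_weights_def)
  show "omega_min w \<le> w i j" "w i j \<le> omega_max w"
    unfolding omega_min_def omega_max_def using fin w_in by auto
qed

lemma graph_ode_component_deriv:
  fixes w :: "'n::finite \<Rightarrow> 'n \<Rightarrow> real" and rho :: "real \<Rightarrow> real^'n"
  assumes "w k k = 0"
    and "(rho has_vector_derivative graph_div w m + graph_lap w r) F"
  shows "((\<lambda>u. rho u $ k) has_real_derivative
            (\<Sum>i\<in>UNIV. sqrt (w k i) * m $ i $ k + w k i * (r $ i - r $ k))) F"
proof -
  have "(\<Sum>i\<in>UNIV - {k}. sqrt (w k i) * m $ i $ k) = (\<Sum>i\<in>UNIV. sqrt (w k i) * m $ i $ k)"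
    using assms(1) by (intro sum.mono_neutral_left) auto
  then show ?thesis
    using bounded_linear.has_vector_derivative[OF bounded_linear_vec_nth assms(2), of k]
    by (simp add: has_real_derivative_iff_has_vector_derivative graph_div_def graph_lap_def
        sum.distrib)
qed

lemma flux_bound_rescaled:
  fixes h :: "real \<Rightarrow> real"
  assumes "0 < c" "0 < r" "\<bar>b\<bar> \<le> (r + c) * h (c / r)"
  shows "0 < r / c" "\<bar>b / c\<bar> \<le> (r / c + 1) * h (1 / (r / c))"
proof -
  show "0 < r / c"
    using assms by simp
  have "(r + c) * h (c / r) = c * ((r / c + 1) * h (1 / (r / c)))"
    using assms by (simp add: field_simps)
  with assms show "\<bar>b / c\<bar> \<le> (r / c + 1) * h (1 / (r / c))"
    by (simp add: field_simps)
qed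

lemma neighbour_below_level_ratio:
  fixes w :: "'n::finite \<Rightarrow> 'n \<Rightarrow> real" and A :: "real \<times> (real^'n) \<Rightarrow> real^'n^'n"
    and rho :: "real \<Rightarrow> real^'n" and h :: "real \<Rightarrow> real"
  assumes graph: "weighted_graph w" and edge: "0 < w k j"
    and A_bound: "\<forall>i j. 0 < w i j \<longrightarrow> (\<forall>s\<in>{0..t0}. \<forall>m\<in>open_cube.
          \<bar>A (s, m) $ i $ j\<bar> \<le> (m $ i + m $ j) * h (m $ j / m $ i))"
    and "0 \<le> M" "2 \<le> X" and h_bdd: "\<forall>u>0. h u \<le> M"
    and h_small: "\<forall>u\<in>{0<..1/X}. h u \<le> sqrt (omega_min w) / 4"
    and cont: "continuous_on {0..t0} rho" and cube: "\<forall>s\<in>{0..t0}. rho s \<in> open_cube"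
    and ode: "\<forall>s\<in>{0..t0}. (rho has_vector_derivative
          graph_div w (A (s, rho s)) + graph_lap w (rho s)) (at s within {0..t0})"
    and c: "0 < c" "c < rho 0 $ k"
    and reached: "s1 \<in> {0..t0}" "rho s1 $ k \<le> c"
  shows "\<exists>s\<in>{0..t0}. rho s $ j \<le> level_ratio CARD('n) (omega_min w) (omega_max w) M X * c"
proof -
  have w_nonneg: "0 \<le> w a b" and w_sym: "w a b = w b a" and w_diag: "w a a = 0" for a b
    using graph by (auto simp: weighted_graph_def)
  obtain s where s: "s \<in> {0<..t0}" "rho s $ k = c" "\<forall>u\<in>{0..<s}. c < rho u $ k"
    using first_hitting_time[OF continuous_on_component[OF cont]] c reached by force
  then have "s \<in> {0..t0}"
    by auto
  define x where "x i = rho s $ i / c" for i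
  define a where "a i = A (s, rho s) $ i $ k / c" for i
  define D where
    "D = (\<Sum>i\<in>UNIV. sqrt (w k i) * A (s, rho s) $ i $ k + w k i * (rho s $ i - rho s $ k))"
  have "((\<lambda>u. rho u $ k) has_real_derivative D) (at s within {0..t0})"
    unfolding D_def using ode \<open>s \<in> {0..t0}\<close> by (intro graph_ode_component_deriv w_diag) auto
  then have "D \<le> 0"
    by (rule has_real_derivative_nonpos_at_first_hit) (use s in \<open>auto simp: less_imp_le\<close>)
  moreover have "(\<Sum>i\<in>UNIV. sqrt (w k i) * a i + w k i * (x i - 1)) = D / c"
    unfolding D_def sum_divide_distrib using c s(2)
    by (intro sum.cong) (auto simp: a_def x_def field_simps)
  ultimately have balance: "(\<Sum>i\<in>UNIV. sqrt (w k i) * a i + w k i * (x i - 1)) \<le> 0"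
    using c by (simp add: divide_nonpos_pos)
  have flux: "0 < x i \<and> \<bar>a i\<bar> \<le> (x i + 1) * h (1 / x i)" if "0 < w k i" for i
  proof -
    have "0 < rho s $ i"
      using cube \<open>s \<in> {0..t0}\<close> by (auto simp: open_cube_def)
    moreover have "\<bar>A (s, rho s) $ i $ k\<bar> \<le> (rho s $ i + c) * h (c / rho s $ i)"
      using A_bound that w_sym cube \<open>s \<in> {0..t0}\<close> s(2) by metis
    ultimately show ?thesis
      unfolding x_def a_def using flux_bound_rescaled c(1) by auto
  qed
  have weights: "\<forall>i\<in>UNIV. w k i = 0 \<or> omega_min w \<le> w k i \<and> w k i \<le> omega_max w"
    using edge_weight_bounds w_nonneg by (metis order_le_less)
  have "x j \<le> level_ratio CARD('n) (omega_min w) (omega_max w) M X"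
    using neighbour_ratio_le_level_ratio[OF finite_class.finite_UNIV
        edge_weight_bounds(1)[of w k j, OF edge] assms(4,5) h_bdd h_small weights _ balance
        UNIV_I edge] flux
    by auto
  then show ?thesis
    using \<open>s \<in> {0..t0}\<close> c by (auto simp: x_def field_simps)
qed

lemma rtranclp_imp_relpowp_bounded:
  fixes R :: "'a::finite \<Rightarrow> 'a \<Rightarrow> bool"
  assumes "R\<^sup>*\<^sup>* a b"
  obtains m where "m \<le> CARD('a \<times> 'a)" "(R ^^ m) a b"
proof -
  let ?S = "{(x, y). R x y}"
  have "(a, b) \<in> ?S\<^sup>*"
    using assms by (simp add: rtranclp_rtrancl_eq)
  then obtain m where "m \<le> card ?S" "(a, b) \<in> ?S ^^ m"
    using rtrancl_finite_eq_relpow[of ?S] by auto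
  moreover have "card ?S \<le> CARD('a \<times> 'a)"
    by (rule card_mono) auto
  moreover have "(R ^^ m) a b"
    using relpowp_relpow_eq[where R = ?S and n = m] \<open>(a, b) \<in> ?S ^^ m\<close> by simp
  ultimately show thesis
    using that[of m] by simp
qed

lemma relpowp_propagates_level:
  fixes R :: "'a \<Rightarrow> 'a \<Rightarrow> bool" and P :: "'a \<Rightarrow> real \<Rightarrow> bool"
  assumes step: "\<And>k j c. R k j \<Longrightarrow> 0 < c \<Longrightarrow> c < bound \<Longrightarrow> P k c \<Longrightarrow> P j (L * c)"
    and "1 \<le> L" "0 < c" "P a c"
  shows "(R ^^ m) a b \<Longrightarrow> L ^ m * c < bound \<Longrightarrow> P b (L ^ m * c)"
proof (induction m arbitrary: b)
  case 0
  then show ?case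
    using assms by simp
next
  case (Suc m)
  then obtain y where "(R ^^ m) a y" "R y b"
    by auto
  have "L ^ m * c \<le> L ^ Suc m * c"
    using assms by (intro mult_right_mono power_increasing) auto
  then have "P y (L ^ m * c)"
    using Suc \<open>(R ^^ m) a y\<close> by simp
  moreover have "0 < L ^ m * c"
    using assms by simp
  moreover have "L ^ m * c < bound"
    using \<open>L ^ m * c \<le> L ^ Suc m * c\<close> Suc.prems(2) by linarith
  ultimately show ?case
    using step[OF \<open>R y b\<close>] by (simp add: mult.assoc)
qed

lemma inf_component_le_level_power:
  fixes w :: "'n::finite \<Rightarrow> 'n \<Rightarrow> real" and A :: "real \<times> (real^'n) \<Rightarrow> real^'n^'n"
    and rho :: "real \<Rightarrow> real^'n" and h :: "real \<Rightarrow> real" and M X :: real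
  defines "K \<equiv> level_ratio CARD('n) (omega_min w) (omega_max w) M X ^ CARD('n \<times> 'n)"
  assumes graph: "weighted_graph w"
    and A_bound: "\<forall>i j. 0 < w i j \<longrightarrow> (\<forall>s\<in>{0..t0}. \<forall>m\<in>open_cube.
          \<bar>A (s, m) $ i $ j\<bar> \<le> (m $ i + m $ j) * h (m $ j / m $ i))"
    and M: "0 \<le> M" "\<forall>u>0. h u \<le> M"
    and X: "2 \<le> X" "0 < omega_min w \<longrightarrow> (\<forall>u\<in>{0<..1/X}. h u \<le> sqrt (omega_min w) / 4)"
    and cont: "continuous_on {0..t0} rho" and cube: "\<forall>s\<in>{0..t0}. rho s \<in> open_cube"
    and ode: "\<forall>s\<in>{0..t0}. (rho has_vector_derivative
          graph_div w (A (s, rho s)) + graph_lap w (rho s)) (at s within {0..t0})"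
    and start: "\<forall>k. eps < rho 0 $ k"
    and hit: "0 \<le> t0" "rho t0 $ i0 = delta"
    and delta: "0 < delta" "K * delta < eps"
  shows "Inf ((\<lambda>s. rho s $ i) ` {0..t0}) \<le> K * delta"
proof -
  define L where "L = level_ratio CARD('n) (omega_min w) (omega_max w) M X"
  define reached where "reached k c \<longleftrightarrow> (\<exists>s\<in>{0..t0}. rho s $ k \<le> c)" for k c
  have "2 \<le> L"
    using X(1) by (simp add: L_def level_ratio_def)
  have step: "reached j (L * c)" if edge: "0 < w k j" and "0 < c" "c < eps" "reached k c" for k j c
  proof -
    have "\<forall>u\<in>{0<..1/X}. h u \<le> sqrt (omega_min w) / 4"
      using X(2) edge_weight_bounds(1)[of w k j] edge by blast
    moreover obtain s1 where "s1 \<in> {0..t0}" "rho s1 $ k \<le> c"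
      using \<open>reached k c\<close> by (auto simp: reached_def)
    moreover have "c < rho 0 $ k"
      using start \<open>c < eps\<close> by (meson less_trans)
    ultimately show ?thesis
      using neighbour_below_level_ratio[OF graph edge A_bound M(1) X(1) M(2) _ cont cube ode]
        \<open>0 < c\<close> by (simp add: reached_def L_def)
  qed
  have "(\<lambda>a b. 0 < w a b)\<^sup>*\<^sup>* i0 i"
    using graph by (simp add: weighted_graph_def)
  then obtain m where m: "m \<le> CARD('n \<times> 'n)" "((\<lambda>a b. 0 < w a b) ^^ m) i0 i"
    by (rule rtranclp_imp_relpowp_bounded)
  have "L ^ m * delta \<le> K * delta"
    unfolding K_def L_def[symmetric] using \<open>2 \<le> L\<close> m(1) delta(1)
    by (intro mult_right_mono power_increasing) auto
  then have "L ^ m * delta < eps"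
    using delta(2) by linarith
  moreover have "reached i0 delta"
    using hit by (auto simp: reached_def)
  ultimately have "reached i (L ^ m * delta)"
    using relpowp_propagates_level[where R = "\<lambda>a b. 0 < w a b" and P = reached and L = L
        and bound = eps and c = delta] step m(2) \<open>2 \<le> L\<close> delta(1) by simp
  then obtain s where "s \<in> {0..t0}" "rho s $ i \<le> L ^ m * delta"
    by (auto simp: reached_def)
  moreover have "bdd_below ((\<lambda>s. rho s $ i) ` {0..t0})"
    using cube by (auto simp: open_cube_def bdd_below_def intro!: exI[of _ 0] less_imp_le)
  ultimately show ?thesis
    using \<open>L ^ m * delta \<le> K * delta\<close> by (meson cInf_lower2 imageI order_trans)
qed

lemma C1_on_imp_continuous_on:
  assumes "C1_on S f"
  shows "continuous_on S f"
proof -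
  obtain f' where "\<forall>x\<in>S. (f has_derivative blinfun_apply (f' x)) (at x within S)"
    using assms unfolding C1_on_def by blast
  then show ?thesis
    by (intro has_derivative_continuous_on) auto
qed

lemma tendsto_at_right_0_small_near_0:
  fixes h :: "real \<Rightarrow> real"
  assumes "(h \<longlongrightarrow> 0) (at_right 0)" "0 < \<eta>"
  obtains X where "2 \<le> X" "\<forall>u\<in>{0<..1/X}. h u \<le> \<eta>"
proof -
  obtain b where "0 < b" and b: "\<forall>u>0. u < b \<longrightarrow> h u < \<eta>"
    using order_tendstoD(2)[OF assms] unfolding eventually_at_right_field by auto
  have "1 / (2 + 1 / b) < b"
    using \<open>0 < b\<close> by (simp add: field_simps)
  then have "\<forall>u\<in>{0<..1 / (2 + 1 / b)}. h u \<le> \<eta>"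
    using b by (auto intro: less_imp_le)
  moreover have "2 \<le> 2 + 1 / b"
    using \<open>0 < b\<close> by simp
  ultimately show thesis
    using that by blast
qed

theorem lemma2p1:
  fixes h :: "real \<Rightarrow> real" and wmin wmax :: real
  assumes h_pos: "\<forall>u>0. h u > 0"
    and h_bdd: "\<exists>M. \<forall>u>0. h u \<le> M"
    and h_lim0: "(h \<longlongrightarrow> 0) (at_right 0)"
    and h_liminf: "(h \<longlongrightarrow> 0) at_top"
  shows "\<exists>K>1. \<forall>(w :: 'n::finite \<Rightarrow> 'n \<Rightarrow> real) (T::real)
            (A :: real \<times> (real^'n) \<Rightarrow> real^'n^'n) (eps::real) (mu :: real^'n) (t0::real)
            (rho :: real \<Rightarrow> real^'n) (delta::real) (i0::'n).
      weighted_graph w \<and> omega_min w = wmin \<and> omega_max w = wmax \<and>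
      T > 0 \<and>
      C1_on ({0..T} \<times> open_cube) A \<and>
      (\<forall>x \<in> {0..T} \<times> open_cube. transpose (A x) = - A x) \<and>
      (\<forall>i j. w i j > 0 \<longrightarrow> (\<forall>s\<in>{0..T}. \<forall>m\<in>open_cube.
          \<bar>A (s, m) $ i $ j\<bar> \<le> (m $ i + m $ j) * h (m $ j / m $ i))) \<and>
      eps > 0 \<and> mu \<in> P_eps eps \<and> t0 \<in> {0<..T} \<and>
      C1_on {0..t0} rho \<and> (\<forall>s\<in>{0..t0}. rho s \<in> open_cube) \<and>
      (\<forall>s\<in>{0..t0}. (rho has_vector_derivative
          (graph_div w (A (s, rho s)) + graph_lap w (rho s))) (at s within {0..t0})) \<and>
      rho 0 = mu \<and>
      delta \<in> {0<..<eps / K} \<and>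
      rho t0 $ i0 = delta \<and> (\<forall>s\<in>{0..<t0}. rho s $ i0 \<noteq> delta)
      \<longrightarrow> (\<forall>i. Inf ((\<lambda>s. rho s $ i) ` {0..t0}) \<le> K * delta)"
proof -
  obtain M where M: "\<forall>u>0. h u \<le> M"
    using h_bdd by blast
  then have "0 \<le> M"
    using h_pos by (meson less_le_trans less_imp_le zero_less_one)
  \<comment> \<open>A graph without edges has omega_min w = Min {}, which carries no information.\<close>
  obtain X where X: "2 \<le> X" "0 < wmin \<longrightarrow> (\<forall>u\<in>{0<..1/X}. h u \<le> sqrt wmin / 4)"
  proof (cases "0 < wmin")
    case True
    then show thesis
      using tendsto_at_right_0_small_near_0[OF h_lim0, of "sqrt wmin / 4"] that by auto
  qed (use that in auto)
  define K where "K = level_ratio CARD('n) wmin wmax M X ^ CARD('n \<times> 'n)"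
  have "1 < K"
    unfolding K_def using X(1)
    by (intro one_less_power) (auto simp: level_ratio_def)
  show ?thesis
  proof (intro exI[of _ K] conjI allI impI \<open>1 < K\<close>, elim conjE)
    fix w :: "'n \<Rightarrow> 'n \<Rightarrow> real" and A :: "real \<times> (real^'n) \<Rightarrow> real^'n^'n"
      and rho :: "real \<Rightarrow> real^'n" and T eps mu t0 delta i0 i
    assume graph: "weighted_graph w" and wmin: "omega_min w = wmin" and wmax: "omega_max w = wmax"
      and A_bound: "\<forall>i j. 0 < w i j \<longrightarrow> (\<forall>s\<in>{0..T}. \<forall>m\<in>open_cube.
          \<bar>A (s, m) $ i $ j\<bar> \<le> (m $ i + m $ j) * h (m $ j / m $ i))"
      and mu: "mu \<in> P_eps eps" and t0: "t0 \<in> {0<..T}" and rho_C1: "C1_on {0..t0} rho"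
      and cube: "\<forall>s\<in>{0..t0}. rho s \<in> open_cube"
      and ode: "\<forall>s\<in>{0..t0}. (rho has_vector_derivative
          graph_div w (A (s, rho s)) + graph_lap w (rho s)) (at s within {0..t0})"
      and "rho 0 = mu" and delta: "delta \<in> {0<..<eps / K}" and hit: "rho t0 $ i0 = delta"
    have K_eq: "K = level_ratio CARD('n) (omega_min w) (omega_max w) M X ^ CARD('n \<times> 'n)"
      by (simp add: K_def wmin wmax)
    have "0 < delta" "K * delta < eps"
      using delta \<open>1 < K\<close> by (auto simp: field_simps)
    moreover have "\<forall>k. eps < rho 0 $ k"
      using mu \<open>rho 0 = mu\<close> by (simp add: P_eps_def)
    moreover have "\<forall>i j. 0 < w i j \<longrightarrow> (\<forall>s\<in>{0..t0}. \<forall>m\<in>open_cube.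
          \<bar>A (s, m) $ i $ j\<bar> \<le> (m $ i + m $ j) * h (m $ j / m $ i))"
      using A_bound t0 by auto
    ultimately show "Inf ((\<lambda>s. rho s $ i) ` {0..t0}) \<le> K * delta"
      using inf_component_le_level_power[OF graph _ \<open>0 \<le> M\<close> M X(1) _
          C1_on_imp_continuous_on[OF rho_C1] cube ode _ _ hit] X(2) t0
      by (simp add: K_eq wmin)
  qed
qed

end
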